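(* For every finite non-empty set $S \subseteq \mathbb{R}^m$, we have \[ |\mathcal{D}(\mathrm{pyr}(S))| = |\mathcal{D}(S)| + 2|S| \quad\text{and}\quad \Delta(\mathcal{D}(\mathrm{pyr}(S))) = \Delta(\mathcal{D}(S)). \]
   Context: For a finite set $S\subseteq\mathbb{R}^m$, its difference set is $\mathcal{D}(S) = S - S = \{a-b : a,b\in S\}$, and its pyramid is $\mathrm{pyr}(S) = (S\times\{0\})\cup\{e_{m+1}\}\subseteq\mathbb{R}^{m+1}$, where $e_{m+1}$ is the $(m+1)$-st unit vector. For a finite set $T\subseteq\mathbb{R}^d$, $\Delta(T) = \max\{|\det(T')| : T'\subseteq T,\ |T'|=d\}$, where $\det(T')$ is the determinant of the $d\times d$ matrix whose columns are the elements of $T'$ (so $\Delta(\mathcal{D}(S))$ is taken in dimension $m$ and $\Delta(\mathcal{D}(\mathrm{pyr}(S)))$ in dimension $m+1$). *)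

theory Defs
  imports Complex_Main "Jordan_Normal_Form.Determinant"
begin

text \<open>Points of R^k are modelled as functions nat => real vanishing at all indices >= k.\<close>

definition in_Rn :: "nat \<Rightarrow> (nat \<Rightarrow> real) \<Rightarrow> bool" where
  "in_Rn k x \<longleftrightarrow> (\<forall>i\<ge>k. x i = 0)"

definition diffset :: "(nat \<Rightarrow> real) set \<Rightarrow> (nat \<Rightarrow> real) set" where
  "diffset S = {a - b | a b. a \<in> S \<and> b \<in> S}"

text \<open>Unit vector e_{m+1} of R^(m+1) (0-based index m).\<close>
definition unitvec :: "nat \<Rightarrow> (nat \<Rightarrow> real)" where
  "unitvec m = (\<lambda>i. if i = m then 1 else 0)"

definition pyr :: "nat \<Rightarrow> (nat \<Rightarrow> real) set \<Rightarrow> (nat \<Rightarrow> real) set" where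
  "pyr m S = ((\<lambda>x. x(m := 0)) ` S) \<union> {unitvec m}"

definition coldet :: "nat \<Rightarrow> (nat \<Rightarrow> (nat \<Rightarrow> real)) \<Rightarrow> real" where
  "coldet d f = det (mat d d (\<lambda>(i, j). f j i))"

text \<open>Delta(T) in dimension d: max |det T'| over d-element subsets T' of T,
  enumerated injectively by {..<d}; the absolute value is independent of the ordering.
  Convention: 0 if T has fewer than d elements.\<close>
definition Delta :: "nat \<Rightarrow> (nat \<Rightarrow> real) set \<Rightarrow> real" where
  "Delta d T = Max (insert 0 {\<bar>coldet d f\<bar> | f. inj_on f {..<d} \<and> f ` {..<d} \<subseteq> T})"

end

theory Submission
  imports Defs
begin

text \<open>Since the points of \<open>S\<close> vanish in coordinate \<open>m\<close>, we have \<open>pyr(S) = S \<union> {e}\<close> with \<open>e = e\<^sub>m\<^sub>+\<^sub>1\<close>,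
  so \<open>D(pyr(S))\<close> is the disjoint union of \<open>D(S)\<close>, \<open>e - S\<close> and \<open>S - e\<close>, whose last coordinates are
  \<open>0\<close>, \<open>1\<close> and \<open>-1\<close>. For the determinants: a basis of \<open>D(S)\<close> together with a column \<open>e - s\<close>
  has the same determinant up to sign (expand along the last row). Conversely, if some column
  of a matrix with columns in \<open>D(pyr(S))\<close> has last coordinate \<open>\<plusminus>1\<close>, subtracting suitable
  multiples of it from the other columns turns those into elements of \<open>D(S)\<close>, and expanding
  along the last row leaves an \<open>m \<times> m\<close> minor with columns in \<open>D(S)\<close>.\<close>

lemma coldet_cong:
  assumes "\<And>i j. i < n \<Longrightarrow> j < n \<Longrightarrow> f j i = g j i"
  shows "coldet n f = coldet n g"
proof -
  have "mat n n (\<lambda>(i, j). f j i) = mat n n (\<lambda>(i, j). g j i)"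
    by (rule eq_matI) (auto simp: assms)
  then show ?thesis
    unfolding coldet_def by simp
qed

lemma coldet_subtract_column_multiples:
  assumes k: "k < n"
  shows "coldet n (\<lambda>j. if j = k then f k else (\<lambda>i. f j i - c j * f k i)) = coldet n f"
proof -
  let ?h = "\<lambda>t j. if j \<noteq> k \<and> j < t then (\<lambda>i. f j i - c j * f k i) else f j"
  have "coldet n (?h t) = coldet n f" for t
  proof (induction t)
    case 0
    then show ?case by simp
  next
    case (Suc t)
    have "coldet n (?h (Suc t)) = coldet n (?h t)"
    proof (cases "t = k \<or> n \<le> t")
      case True
      then show ?thesis
        by (intro coldet_cong) auto
    next
      case False
      have "mat n n (\<lambda>(i, j). ?h (Suc t) j i) = addcol (- c t) t k (mat n n (\<lambda>(i, j). ?h t j i))"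
        by (rule eq_matI) (use False k in auto)
      then show ?thesis
        unfolding coldet_def using False k by (simp del: det_addcol) (rule det_addcol, auto)
    qed
    with Suc show ?case by simp
  qed
  moreover have "coldet n (\<lambda>j. if j = k then f k else (\<lambda>i. f j i - c j * f k i)) = coldet n (?h n)"
    by (intro coldet_cong) auto
  ultimately show ?thesis by simp
qed

lemma coldet_Suc_expand_last_row:
  assumes k: "k \<le> n" and zero: "\<And>j. j \<le> n \<Longrightarrow> j \<noteq> k \<Longrightarrow> g j n = 0"
  shows "coldet (Suc n) g = g k n * (-1) ^ (n + k) * coldet n (\<lambda>j. g (if j < k then j else Suc j))"
proof -
  let ?A = "mat (Suc n) (Suc n) (\<lambda>(i, j). g j i)"
  have "coldet (Suc n) g = (\<Sum>j<Suc n. ?A $$ (n, j) * cofactor ?A n j)"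
    unfolding coldet_def by (rule laplace_expansion_row) auto
  also have "\<dots> = (\<Sum>j\<in>{k}. ?A $$ (n, j) * cofactor ?A n j)"
    by (rule sum.mono_neutral_right) (use k zero in auto)
  also have "\<dots> = g k n * cofactor ?A n k"
    using k by simp
  also have "cofactor ?A n k = (-1) ^ (n + k) * coldet n (\<lambda>j. g (if j < k then j else Suc j))"
  proof -
    have "mat_delete ?A n k = mat n n (\<lambda>(i, j). g (if j < k then j else Suc j) i)"
      unfolding mat_delete_def by (rule eq_matI) (use k in auto)
    then show ?thesis
      unfolding cofactor_def coldet_def by simp
  qed
  finally show ?thesis
    by simp
qed

lemma coldet_Suc_zero_last_row:
  assumes "\<And>j. j \<le> n \<Longrightarrow> g j n = 0"
  shows "coldet (Suc n) g = 0"
proof -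
  let ?A = "mat (Suc n) (Suc n) (\<lambda>(i, j). g j i)"
  have "coldet (Suc n) g = (\<Sum>j<Suc n. ?A $$ (n, j) * cofactor ?A n j)"
    unfolding coldet_def by (rule laplace_expansion_row) auto
  also have "\<dots> = 0"
    using assms by simp
  finally show ?thesis .
qed

lemma coldet_not_inj_on:
  assumes "\<not> inj_on g {..<n}"
  shows "coldet n g = 0"
proof -
  obtain a b where ab: "a < n" "b < n" "a \<noteq> b" "g a = g b"
    using assms unfolding inj_on_def by auto
  show ?thesis
    unfolding coldet_def by (rule det_identical_columns[of _ n a b]) (use ab in auto)
qed

lemma finite_Delta_candidates:
  assumes "finite T"
  shows "finite {\<bar>coldet d f\<bar> | f. inj_on f {..<d} \<and> f ` {..<d} \<subseteq> T}"
proof (rule finite_subset)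
  show "{\<bar>coldet d f\<bar> | f. inj_on f {..<d} \<and> f ` {..<d} \<subseteq> T}
      \<subseteq> (\<lambda>g. \<bar>coldet d g\<bar>) ` PiE {..<d} (\<lambda>_. T)"
  proof clarify
    fix f assume "f ` {..<d} \<subseteq> T"
    then have "restrict f {..<d} \<in> PiE {..<d} (\<lambda>_. T)"
      by auto
    moreover have "coldet d f = coldet d (restrict f {..<d})"
      by (rule coldet_cong) auto
    ultimately show "\<bar>coldet d f\<bar> \<in> (\<lambda>g. \<bar>coldet d g\<bar>) ` PiE {..<d} (\<lambda>_. T)"
      by auto
  qed
  show "finite ((\<lambda>g. \<bar>coldet d g\<bar>) ` PiE {..<d} (\<lambda>_. T))"
    using assms by (simp add: finite_PiE)
qed

lemma Delta_nonneg:
  assumes "finite T"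
  shows "0 \<le> Delta d T"
  unfolding Delta_def by (rule Max_ge) (use finite_Delta_candidates[OF assms] in auto)

lemma abs_coldet_le_Delta:
  assumes "finite T" and "f ` {..<d} \<subseteq> T"
  shows "\<bar>coldet d f\<bar> \<le> Delta d T"
proof (cases "inj_on f {..<d}")
  case True
  show ?thesis
    unfolding Delta_def by (rule Max_ge) (use finite_Delta_candidates[OF assms(1)] True assms in auto)
next
  case False
  then show ?thesis
    using coldet_not_inj_on Delta_nonneg[OF assms(1)] by simp
qed

lemma Delta_le:
  assumes "finite T" and "0 \<le> c"
    and "\<And>f. inj_on f {..<d} \<Longrightarrow> f ` {..<d} \<subseteq> T \<Longrightarrow> \<bar>coldet d f\<bar> \<le> c"
  shows "Delta d T \<le> c"
  unfolding Delta_def by (rule Max.boundedI) (use finite_Delta_candidates[OF assms(1)] assms in auto)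

lemma finite_diffset: "finite S \<Longrightarrow> finite (diffset S)"
proof -
  assume "finite S"
  have "diffset S = (\<lambda>(a, b). a - b) ` (S \<times> S)"
    unfolding diffset_def by auto
  with \<open>finite S\<close> show ?thesis by simp
qed

lemma diff_in_diffset: "a \<in> S \<Longrightarrow> b \<in> S \<Longrightarrow> a - b \<in> diffset S"
  unfolding diffset_def by auto

lemma diffset_insert:
  assumes "S \<noteq> {}"
  shows "diffset (insert e S) = diffset S \<union> (\<lambda>s. e - s) ` S \<union> (\<lambda>s. s - e) ` S"
proof -
  obtain s where "s \<in> S" using assms by auto
  moreover have "e - e = s - s"
    by (simp add: fun_eq_iff)
  ultimately have "e - e \<in> diffset S"
    using diff_in_diffset by metis
  then show ?thesis
    unfolding diffset_def by blast
qed

context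
  fixes m :: nat and S :: "(nat \<Rightarrow> real) set"
  assumes finite_S: "finite S" and S_nonempty: "S \<noteq> {}" and S_in_Rn: "\<forall>x\<in>S. in_Rn m x"
begin

lemma last_coord_eq_0 [simp]: "x \<in> S \<Longrightarrow> x m = 0"
  using S_in_Rn unfolding in_Rn_def by blast

lemma diffset_last_coord_eq_0 [simp]: "v \<in> diffset S \<Longrightarrow> v m = 0"
  unfolding diffset_def by auto

lemma unitvec_last_coord [simp]: "unitvec m m = 1"
  unfolding unitvec_def by simp

lemma pyr_eq_insert: "pyr m S = insert (unitvec m) S"
proof -
  have "x(m := 0) = x" if "x \<in> S" for x
    using that by (auto simp: fun_eq_iff)
  then have "(\<lambda>x. x(m := 0)) ` S = S"
    by simp
  then show ?thesis
    unfolding pyr_def by auto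
qed

lemma diffset_pyr:
  "diffset (pyr m S) = diffset S \<union> (\<lambda>s. unitvec m - s) ` S \<union> (\<lambda>s. s - unitvec m) ` S"
  unfolding pyr_eq_insert using S_nonempty by (rule diffset_insert)

lemma diffset_pyr_cases:
  assumes "v \<in> diffset (pyr m S)"
  obtains "v \<in> diffset S"
    | s where "s \<in> S" "v = unitvec m - s"
    | s where "s \<in> S" "v = s - unitvec m"
  using assms unfolding diffset_pyr by blast

lemma finite_diffset_pyr: "finite (diffset (pyr m S))"
  unfolding diffset_pyr using finite_S finite_diffset by blast

lemma card_diffset_pyr: "card (diffset (pyr m S)) = card (diffset S) + 2 * card S"
proof -
  let ?up = "(\<lambda>s. unitvec m - s) ` S" and ?down = "(\<lambda>s. s - unitvec m) ` S"
  have "inj_on (\<lambda>s. unitvec m - s) S" "inj_on (\<lambda>s. s - unitvec m) S"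
    by (auto intro!: inj_onI simp: fun_eq_iff)
  then have card_up_down: "card ?up = card S" "card ?down = card S"
    by (simp_all add: card_image)
  have "diffset S \<inter> ?up = {}" "(diffset S \<union> ?up) \<inter> ?down = {}"
    by (fastforce dest: diffset_last_coord_eq_0 fun_cong[of _ _ m])+
  then have "card (diffset S \<union> ?up \<union> ?down) = card (diffset S) + card ?up + card ?down"
    using finite_S finite_diffset by (simp add: card_Un_disjoint)
  then show ?thesis
    unfolding diffset_pyr card_up_down by simp
qed

lemma diffset_pyr_last_coord:
  assumes "v \<in> diffset (pyr m S)" and "v m \<noteq> 0"
  shows "\<bar>v m\<bar> = 1"
  using assms by (cases rule: diffset_pyr_cases) auto

lemma diffset_pyr_eliminate:
  assumes u: "u \<in> diffset (pyr m S)" and v: "v \<in> diffset (pyr m S)" and "v m \<noteq> 0"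
  shows "(\<lambda>i. u i - u m * v m * v i) \<in> diffset S"
proof -
  from v \<open>v m \<noteq> 0\<close> obtain b where b: "b \<in> S" "v = unitvec m - b \<or> v = b - unitvec m"
    by (cases rule: diffset_pyr_cases) auto
  from u show ?thesis
  proof (cases rule: diffset_pyr_cases)
    case 1
    then show ?thesis by simp
  next
    case (2 a)
    then have "(\<lambda>i. u i - u m * v m * v i) = b - a"
      using b by (auto simp: fun_eq_iff)
    then show ?thesis
      using diff_in_diffset[OF b(1) \<open>a \<in> S\<close>] by simp
  next
    case (3 a)
    then have "(\<lambda>i. u i - u m * v m * v i) = a - b"
      using b by (auto simp: fun_eq_iff)
    then show ?thesis
      using diff_in_diffset[OF \<open>a \<in> S\<close> b(1)] by simp
  qed
qed

lemma Delta_diffset_le_Delta_diffset_pyr: "Delta m (diffset S) \<le> Delta (Suc m) (diffset (pyr m S))"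
proof (rule Delta_le[OF finite_diffset[OF finite_S] Delta_nonneg[OF finite_diffset_pyr]])
  fix g assume "inj_on g {..<m}" and g: "g ` {..<m} \<subseteq> diffset S"
  obtain s where s: "s \<in> S"
    using S_nonempty by auto
  define f where "f = g(m := unitvec m - s)"
  have g_last: "g j m = 0" if "j < m" for j
    using g that by auto
  have "coldet (Suc m) f = f m m * (-1) ^ (m + m) * coldet m (\<lambda>j. f (if j < m then j else Suc j))"
    by (rule coldet_Suc_expand_last_row) (use g_last in \<open>auto simp: f_def\<close>)
  also have "coldet m (\<lambda>j. f (if j < m then j else Suc j)) = coldet m g"
    by (rule coldet_cong) (simp add: f_def)
  moreover have "f m m = 1"
    using s by (simp add: f_def)
  ultimately have "coldet (Suc m) f = coldet m g"
    by simp
  moreover have "f ` {..<Suc m} \<subseteq> diffset (pyr m S)"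
    using g s unfolding diffset_pyr by (auto simp: f_def lessThan_Suc)
  ultimately show "\<bar>coldet m g\<bar> \<le> Delta (Suc m) (diffset (pyr m S))"
    using abs_coldet_le_Delta[OF finite_diffset_pyr] by metis
qed

lemma Delta_diffset_pyr_le_Delta_diffset: "Delta (Suc m) (diffset (pyr m S)) \<le> Delta m (diffset S)"
proof (rule Delta_le[OF finite_diffset_pyr Delta_nonneg[OF finite_diffset[OF finite_S]]])
  fix f assume "inj_on f {..<Suc m}" and f: "f ` {..<Suc m} \<subseteq> diffset (pyr m S)"
  show "\<bar>coldet (Suc m) f\<bar> \<le> Delta m (diffset S)"
  proof (cases "\<forall>j\<le>m. f j m = 0")
    case True
    then show ?thesis
      using coldet_Suc_zero_last_row Delta_nonneg[OF finite_diffset[OF finite_S]] by simp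
  next
    case False
    then obtain k where k: "k \<le> m" "f k m \<noteq> 0" by auto
    define H where "H = (\<lambda>j. if j = k then f k else (\<lambda>i. f j i - f j m * f k m * f k i))"
    have f_mem: "f j \<in> diffset (pyr m S)" if "j \<le> m" for j
      using f that by (auto simp: image_subset_iff less_Suc_eq_le)
    have H_diffset: "H j \<in> diffset S" if "j \<le> m" "j \<noteq> k" for j
      using diffset_pyr_eliminate[OF f_mem f_mem] that k by (simp add: H_def)
    have "coldet (Suc m) f = coldet (Suc m) H"
      unfolding H_def using k by (subst coldet_subtract_column_multiples) auto
    also have "\<dots> = H k m * (-1) ^ (m + k) * coldet m (\<lambda>j. H (if j < k then j else Suc j))"
      by (rule coldet_Suc_expand_last_row) (use k H_diffset in auto)
    finally have "\<bar>coldet (Suc m) f\<bar> = \<bar>coldet m (\<lambda>j. H (if j < k then j else Suc j))\<bar>"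
      using diffset_pyr_last_coord[OF f_mem] k by (simp add: H_def abs_mult power_abs)
    also have "\<dots> \<le> Delta m (diffset S)"
      by (rule abs_coldet_le_Delta[OF finite_diffset[OF finite_S]]) (use H_diffset k in auto)
    finally show ?thesis .
  qed
qed

end

theorem lemma5p4:
  fixes m :: nat and S :: "(nat \<Rightarrow> real) set"
  assumes "finite S" and "S \<noteq> {}" and "\<forall>x\<in>S. in_Rn m x"
  shows "card (diffset (pyr m S)) = card (diffset S) + 2 * card S
    \<and> Delta (Suc m) (diffset (pyr m S)) = Delta m (diffset S)"
  using card_diffset_pyr Delta_diffset_le_Delta_diffset_pyr Delta_diffset_pyr_le_Delta_diffset assms
  by (meson order_antisym)

end
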